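(* Let $\alpha\in(0,1)$ and let $\{a_n\}$ be a positive sequence. Suppose there exists $\delta>0$ such that for all $\epsilon>0$ and $\tilde\alpha\in[\alpha-\delta,\alpha+\delta]$, $$\sup_{P\in\mathbf P_0}P\big(c_{n,1-\tilde\alpha}(P)-\epsilon\le I_n\le c_{n,1-\tilde\alpha}(P)+\epsilon\big)\le a_n^{-1}(\epsilon\wedge1)+o(1).$$ (i) If $I_n\le U_{n,P}+o_p(a_n)$ and $\hat U_n\ge U^\star_{n,P}+o_p(a_n)$ uniformly in $P\in\mathbf P_0$, for some $U^\star_{n,P}$ independent of $\{V_i\}_{i=1}^n$ and equal in distribution to $U_{n,P}$, then $\limsup_{n\to\infty}\sup_{P\in\mathbf P_0}P(I_n>\hat c_{n,1-\alpha})\le\alpha$. (ii) If $I_n=U_{n,P}+o_p(a_n)$ and $\hat U_n=U^\star_{n,P}+o_p(a_n)$ uniformly in $P\in\mathbf P_0$, for some $U^\star_{n,P}$ independent of $\{V_i\}_{i=1}^n$ and equal in distribution to $U_{n,P}$, then $\limsup_{n\to\infty}\sup_{P\in\mathbf P_0}|P(I_n>\hat c_{n,1-\alpha})-\alpha|=0$.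
   Context: Data $\{V_i\}_{i=1}^n$ are i.i.d. with law $P$ in a family $\mathbf P_0$; all random variables are defined on a common (possibly enlarged) probability space. $I_n$ is a real statistic computed from the data, $\hat U_n$ a real random variable depending on the data and possibly on auxiliary randomness, and $U_{n,P}$, $U^\star_{n,P}$ real random variables. $c_{n,1-\alpha}(P)\equiv\inf\{u:P(I_n\le u)\ge1-\alpha\}$ and $\hat c_{n,1-\alpha}\equiv\inf\{u:P(\hat U_n\le u\mid\{V_i\}_{i=1}^n)\ge1-\alpha\}$. $X_n=o_p(b_n)$ uniformly in $P\in\mathbf P_0$ means that for every $\epsilon>0$, $\limsup_n\sup_{P\in\mathbf P_0}P(|X_n|>\epsilon b_n)=0$. *)

theory Defs
  imports "HOL-Probability.Probability"
begin

(* Sample space: \<Omega> = (nat \<Rightarrow> 'v) \<times> 'a.  First component: the data sequence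
   V_1, V_2, ... (stored at indices 0,1,...), i.i.d. with law P.
   Second component: auxiliary randomness, independent of the data. *)

definition dataM :: "'v measure \<Rightarrow> (nat \<Rightarrow> 'v) measure" where
  "dataM P = (\<Pi>\<^sub>M i\<in>UNIV. P)"

definition jointM :: "'v measure \<Rightarrow> 'a measure \<Rightarrow> ((nat \<Rightarrow> 'v) \<times> 'a) measure" where
  "jointM P A = dataM P \<Otimes>\<^sub>M A"

definition quantile :: "(real \<Rightarrow> real) \<Rightarrow> real \<Rightarrow> real" where
  "quantile F \<beta> = Inf {u. \<beta> \<le> F u}"

definition crit :: "((nat \<Rightarrow> 'v) \<times> 'a) measure \<Rightarrow> ((nat \<Rightarrow> 'v) \<Rightarrow> real) \<Rightarrow> real \<Rightarrow> real" where
  "crit M In \<beta> = quantile (\<lambda>u. measure M {\<omega> \<in> space M. In (fst \<omega>) \<le> u}) \<beta>"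

(* \<hat>c_{n,\<beta>} = inf{u : P(\<hat>U_n \<le> u | data) \<ge> \<beta>}, the conditional probability given the
   data being the probability over the (independent) auxiliary randomness *)
definition boot_crit :: "'a measure \<Rightarrow> ((nat \<Rightarrow> 'v) \<Rightarrow> 'a \<Rightarrow> real) \<Rightarrow> real \<Rightarrow> (nat \<Rightarrow> 'v) \<Rightarrow> real" where
  "boot_crit A Uh \<beta> d = quantile (\<lambda>u. measure A {x \<in> space A. Uh d x \<le> u}) \<beta>"

definition unif_op :: "'p set \<Rightarrow> ('p \<Rightarrow> 'w measure) \<Rightarrow> (nat \<Rightarrow> 'p \<Rightarrow> 'w \<Rightarrow> real) \<Rightarrow> (nat \<Rightarrow> real) \<Rightarrow> bool" where
  "unif_op P0 M X b \<longleftrightarrow>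
     (\<forall>n. \<forall>P\<in>P0. X n P \<in> borel_measurable (M P)) \<and>
     (\<forall>\<epsilon>>0. \<forall>\<eta>>0. eventually (\<lambda>n. \<forall>P\<in>P0.
          measure (M P) {\<omega> \<in> space (M P). \<bar>X n P \<omega>\<bar> > \<epsilon> * b n} \<le> \<eta>) sequentially)"

definition valid_copy :: "'v measure set \<Rightarrow> ('v measure \<Rightarrow> ((nat \<Rightarrow> 'v) \<times> 'a) measure) \<Rightarrow> 'v measure
     \<Rightarrow> (nat \<Rightarrow> 'v measure \<Rightarrow> (nat \<Rightarrow> 'v) \<times> 'a \<Rightarrow> real)
     \<Rightarrow> (nat \<Rightarrow> 'v measure \<Rightarrow> (nat \<Rightarrow> 'v) \<times> 'a \<Rightarrow> real) \<Rightarrow> bool" where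
  "valid_copy P0 M Vsp U Us \<longleftrightarrow>
     (\<forall>n. \<forall>P\<in>P0. U n P \<in> borel_measurable (M P) \<and> Us n P \<in> borel_measurable (M P) \<and>
        distr (M P) borel (Us n P) = distr (M P) borel (U n P) \<and>
        prob_space.indep_set (M P)
            {Us n P -` B \<inter> space (M P) | B. B \<in> sets borel}
            {(\<lambda>\<omega>. restrict (fst \<omega>) {..<n}) -` C \<inter> space (M P) | C. C \<in> sets (\<Pi>\<^sub>M i\<in>{..<n}. Vsp)})"

end

theory Submission
  imports Defs
begin

(* Fix n and P, and let c be the (1 - alpha')-quantile of I_n. By Fubini over the auxiliary
   randomness, the bootstrap cdf G(d, u) = P(Uhat_n(d, .) <= u) has the same integral as the
   indicator of {Uhat_n <= u} over every event determined by the first n data, and U* is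
   independent of such events. Comparing the two on {G > P(U* <= t) + nu} (and on
   {G < P(U* <= t) - nu}) shows that G stays within nu of the cdf of U*, hence of U, outside an
   event of probability P(|R'| > eps a_n)/nu. As I_n is within eps a_n of U outside an event of
   probability nu, the bootstrap critical value lies beyond c -+ 3 eps a_n for
   alpha' = alpha +- 2 nu, up to these small events. Hence the rejection probability is alpha'
   up to the mass of I_n in [c - 3 eps a_n, c + 3 eps a_n], which anti-concentration bounds by
   3 eps + o(1); letting eps and nu tend to 0 gives both parts. *)

section \<open>Quantiles of distribution functions\<close>

lemma quantile_le_iff:
  fixes F :: "real \<Rightarrow> real"
  assumes mono: "mono F" and right_cont: "\<And>x. continuous (at_right x) F"
    and bot: "(F \<longlongrightarrow> 0) at_bot" and top: "(F \<longlongrightarrow> 1) at_top"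
    and \<beta>: "0 < \<beta>" "\<beta> < 1"
  shows "\<beta> \<le> F u \<longleftrightarrow> quantile F \<beta> \<le> u"
proof -
  let ?S = "{u. \<beta> \<le> F u}"
  have "eventually (\<lambda>x. F x > \<beta>) at_top"
    using top \<beta> by (intro order_tendstoD) auto
  then obtain x0 where x0: "\<And>x. x \<ge> x0 \<Longrightarrow> F x > \<beta>" by (auto simp: eventually_at_top_linorder)
  have nonempty: "?S \<noteq> {}" using x0[of x0] by (auto intro: less_imp_le)
  have "eventually (\<lambda>x. F x < \<beta>) at_bot"
    using bot \<beta> by (intro order_tendstoD) auto
  then obtain x1 where x1: "\<And>x. x \<le> x1 \<Longrightarrow> F x < \<beta>" by (auto simp: eventually_at_bot_linorder)
  have bdd: "bdd_below ?S"
  proof (rule bdd_belowI)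
    fix x assume "x \<in> ?S"
    then show "x1 \<le> x" using x1[of x] by (cases "x \<le> x1") auto
  qed
  show ?thesis
  proof
    assume "\<beta> \<le> F u" then show "quantile F \<beta> \<le> u"
      unfolding quantile_def by (intro cInf_lower bdd) auto
  next
    assume q_le: "quantile F \<beta> \<le> u"
    let ?q = "quantile F \<beta>"
    have above: "eventually (\<lambda>x. \<beta> \<le> F x) (at_right ?q)"
      unfolding eventually_at_right_field
    proof (intro exI[of _ "?q + 1"] conjI allI impI)
      fix x assume "?q < x"
      then have "Inf ?S < x" unfolding quantile_def .
      then obtain s where "s \<in> ?S" "s < x" using cInf_less_iff[OF nonempty bdd] by auto
      then show "\<beta> \<le> F x" using monoD[OF mono, of s x] by simp
    qed simp
    have "(F \<longlongrightarrow> F ?q) (at_right ?q)" using right_cont[of ?q] by (simp add: continuous_within)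
    then have "\<beta> \<le> F ?q" by (rule tendsto_lowerbound[OF _ above]) simp
    then show "\<beta> \<le> F u" using monoD[OF mono q_le] by simp
  qed
qed

lemma (in prob_space) quantile_cdf_le_iff:
  assumes X: "X \<in> borel_measurable M" and \<beta>: "0 < \<beta>" "\<beta> < 1"
  shows "\<beta> \<le> prob {\<omega>\<in>space M. X \<omega> \<le> u} \<longleftrightarrow> quantile (\<lambda>u. prob {\<omega>\<in>space M. X \<omega> \<le> u}) \<beta> \<le> u"
proof -
  interpret R: real_distribution "distr M borel X" using X by simp
  have cdf: "(\<lambda>u. prob {\<omega>\<in>space M. X \<omega> \<le> u}) = cdf (distr M borel X)"
    unfolding cdf_def using X by (subst measure_distr) (auto intro!: arg_cong[where f=prob])
  have "\<beta> \<le> cdf (distr M borel X) u \<longleftrightarrow> quantile (cdf (distr M borel X)) \<beta> \<le> u"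
    by (rule quantile_le_iff[OF _ R.cdf_is_right_cont R.cdf_lim_at_bot _ \<beta>])
       (auto simp: mono_def R.cdf_nondecreasing intro: R.cdf_lim_at_top_prob)
  then show ?thesis using fun_cong[OF cdf, of u] by (simp only: cdf)
qed

lemma measure_le_eq_if_distr_eq:
  fixes X Y :: "'a \<Rightarrow> real"
  assumes X: "X \<in> borel_measurable M" and Y: "Y \<in> borel_measurable M"
    and distr: "distr M borel X = distr M borel Y"
  shows "measure M {\<omega>\<in>space M. X \<omega> \<le> t} = measure M {\<omega>\<in>space M. Y \<omega> \<le> t}"
proof -
  have "measure M {\<omega>\<in>space M. X \<omega> \<le> t} = measure (distr M borel X) {..t}"
    using X by (subst measure_distr) (auto intro!: arg_cong[where f="measure M"])
  also have "\<dots> = measure (distr M borel Y) {..t}" by (simp only: distr)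
  also have "\<dots> = measure M {\<omega>\<in>space M. Y \<omega> \<le> t}"
    using Y by (subst measure_distr) (auto intro!: arg_cong[where f="measure M"])
  finally show ?thesis .
qed

lemma (in finite_measure) finite_measure_le_Un:
  assumes "A \<subseteq> B \<union> C" "B \<in> sets M" "C \<in> sets M"
  shows "measure M A \<le> measure M B + measure M C"
  using finite_measure_mono[OF assms(1)] measure_Un_le[OF assms(2,3)] assms(2,3) by auto

lemma crit_le_iff:
  fixes M :: "((nat \<Rightarrow> 'v) \<times> 'x) measure" and In :: "(nat \<Rightarrow> 'v) \<Rightarrow> real"
  assumes "prob_space M" and "(\<lambda>\<omega>. In (fst \<omega>)) \<in> borel_measurable M" "0 < \<beta>" "\<beta> < 1"
  shows "\<beta> \<le> measure M {\<omega>\<in>space M. In (fst \<omega>) \<le> u} \<longleftrightarrow> crit M In \<beta> \<le> u"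
  unfolding crit_def by (rule prob_space.quantile_cdf_le_iff[OF assms])

lemma prob_above_crit_minus_le:
  fixes M :: "((nat \<Rightarrow> 'v) \<times> 'x) measure" and In :: "(nat \<Rightarrow> 'v) \<Rightarrow> real"
  assumes "prob_space M" and In: "(\<lambda>\<omega>. In (fst \<omega>)) \<in> borel_measurable M" and \<beta>: "0 < \<beta>" "\<beta> < 1"
  shows "measure M {\<omega>\<in>space M. crit M In \<beta> - \<epsilon> < In (fst \<omega>)}
    \<le> 1 - \<beta> + measure M {\<omega>\<in>space M. crit M In \<beta> - \<epsilon> \<le> In (fst \<omega>) \<and> In (fst \<omega>) \<le> crit M In \<beta> + \<epsilon>}"
proof -
  interpret prob_space M by fact
  define c where "c = crit M In \<beta>"
  define L where "L = {\<omega>\<in>space M. In (fst \<omega>) \<le> c}"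
  define W where "W = {\<omega>\<in>space M. c - \<epsilon> \<le> In (fst \<omega>) \<and> In (fst \<omega>) \<le> c + \<epsilon>}"
  have L: "L \<in> events" unfolding L_def using In by measurable
  have W: "W \<in> events" unfolding W_def using In by measurable
  have "\<beta> \<le> prob L" unfolding L_def c_def using crit_le_iff[OF assms] by simp
  moreover have "{\<omega>\<in>space M. c - \<epsilon> < In (fst \<omega>)} \<subseteq> (space M - L) \<union> W"
    unfolding L_def W_def by auto
  then have "prob {\<omega>\<in>space M. c - \<epsilon> < In (fst \<omega>)} \<le> prob (space M - L) + prob W"
    using L W by (intro finite_measure_le_Un) auto
  moreover have "prob (space M - L) = 1 - prob L" using L by (rule prob_compl)
  ultimately show ?thesis unfolding c_def W_def by linarith
qed

lemma prob_above_crit_plus_ge: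
  fixes M :: "((nat \<Rightarrow> 'v) \<times> 'x) measure" and In :: "(nat \<Rightarrow> 'v) \<Rightarrow> real"
  assumes "prob_space M" and In: "(\<lambda>\<omega>. In (fst \<omega>)) \<in> borel_measurable M" and \<beta>: "0 < \<beta>" "\<beta> < 1"
    and \<epsilon>: "0 < \<epsilon>"
  shows "1 - \<beta> - measure M {\<omega>\<in>space M. crit M In \<beta> - \<epsilon> \<le> In (fst \<omega>) \<and> In (fst \<omega>) \<le> crit M In \<beta> + \<epsilon>}
    \<le> measure M {\<omega>\<in>space M. crit M In \<beta> + \<epsilon> < In (fst \<omega>)}"
proof -
  interpret prob_space M by fact
  define c where "c = crit M In \<beta>"
  define L where "L = {\<omega>\<in>space M. In (fst \<omega>) \<le> c - \<epsilon>}"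
  define L' where "L' = {\<omega>\<in>space M. In (fst \<omega>) \<le> c + \<epsilon>}"
  define W where "W = {\<omega>\<in>space M. c - \<epsilon> \<le> In (fst \<omega>) \<and> In (fst \<omega>) \<le> c + \<epsilon>}"
  have L: "L \<in> events" unfolding L_def using In by measurable
  have L': "L' \<in> events" unfolding L'_def using In by measurable
  have W: "W \<in> events" unfolding W_def using In by measurable
  have "prob L < \<beta>"
    using crit_le_iff[OF assms(1-4), of "c - \<epsilon>"] \<epsilon> unfolding L_def c_def by linarith
  moreover have "L' \<subseteq> L \<union> W" unfolding L_def L'_def W_def by auto
  then have "prob L' \<le> prob L + prob W" using L W by (intro finite_measure_le_Un) auto
  moreover have "{\<omega>\<in>space M. c + \<epsilon> < In (fst \<omega>)} = space M - L'" unfolding L'_def by auto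
  then have "prob {\<omega>\<in>space M. c + \<epsilon> < In (fst \<omega>)} = 1 - prob L'" using L' by (simp add: prob_compl)
  ultimately show ?thesis unfolding c_def W_def by linarith
qed

section \<open>The bootstrap critical value for a fixed sample size and law\<close>

locale bootstrap_setting =
  fixes P :: "'v measure" and Vsp :: "'v measure" and X :: "'a measure" and Asp :: "'a measure"
    and n :: nat and Uh :: "(nat \<Rightarrow> 'v) \<Rightarrow> 'a \<Rightarrow> real" and \<beta> :: real
  assumes prob_space_P: "prob_space P" and sets_P: "sets P = sets Vsp"
    and prob_space_X: "prob_space X" and sets_X: "sets X = sets Asp"
    and Uh_measurable: "(\<lambda>\<omega>. Uh (fst \<omega>) (snd \<omega>)) \<in> borel_measurable ((\<Pi>\<^sub>M i\<in>UNIV. Vsp) \<Otimes>\<^sub>M Asp)"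
    and Uh_prefix: "\<And>d d' x. (\<And>i. i < n \<Longrightarrow> d i = d' i) \<Longrightarrow> Uh d x = Uh d' x"
    and \<beta>: "0 < \<beta>" "\<beta> < 1"
begin

abbreviation "D \<equiv> dataM P"
abbreviation "M \<equiv> jointM P X"

definition boot_cdf :: "(nat \<Rightarrow> 'v) \<Rightarrow> real \<Rightarrow> real" where
  "boot_cdf d u = measure X {x \<in> space X. Uh d x \<le> u}"

abbreviation indep_of_data :: "((nat \<Rightarrow> 'v) \<times> 'a \<Rightarrow> real) \<Rightarrow> bool" where
  "indep_of_data Y \<equiv> prob_space.indep_set M {Y -` B \<inter> space M | B. B \<in> sets borel}
     {(\<lambda>\<omega>. restrict (fst \<omega>) {..<n}) -` C \<inter> space M | C. C \<in> sets (\<Pi>\<^sub>M i\<in>{..<n}. Vsp)}"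

lemma prob_space_data: "prob_space D"
  unfolding dataM_def using prob_space_P by (intro prob_space_PiM) auto

lemma prob_space_joint: "prob_space M"
proof -
  interpret D: prob_space D by (rule prob_space_data)
  interpret X: prob_space X by (rule prob_space_X)
  interpret pair_prob_space D X by unfold_locales
  show ?thesis unfolding jointM_def by (rule P.prob_space_axioms)
qed

lemma sets_data: "sets D = sets (\<Pi>\<^sub>M i\<in>UNIV. Vsp)"
  unfolding dataM_def by (rule sets_PiM_cong) (auto simp: sets_P)

lemma sets_joint: "sets M = sets ((\<Pi>\<^sub>M i\<in>UNIV. Vsp) \<Otimes>\<^sub>M Asp)"
  unfolding jointM_def by (rule sets_pair_measure_cong[OF sets_data sets_X])

lemma space_data: "space D = space (\<Pi>\<^sub>M i\<in>UNIV. Vsp)"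
  by (rule sets_eq_imp_space_eq[OF sets_data])

lemma space_joint: "space M = space D \<times> space X"
  unfolding jointM_def by (simp add: space_pair_measure)

lemma data_measurable_joint:
  fixes f :: "(nat \<Rightarrow> 'v) \<Rightarrow> real"
  assumes "f \<in> borel_measurable (\<Pi>\<^sub>M i\<in>UNIV. Vsp)"
  shows "(\<lambda>\<omega>. f (fst \<omega>)) \<in> borel_measurable M"
proof -
  have "measurable D (borel :: real measure) = measurable (\<Pi>\<^sub>M i\<in>UNIV. Vsp) borel"
    by (rule measurable_cong_sets[OF sets_data refl])
  then have "f \<in> borel_measurable D" using assms by simp
  then show ?thesis unfolding jointM_def by measurable
qed

lemma Uh_measurable_joint: "(\<lambda>\<omega>. Uh (fst \<omega>) (snd \<omega>)) \<in> borel_measurable M"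
proof -
  have "measurable M (borel :: real measure) = measurable ((\<Pi>\<^sub>M i\<in>UNIV. Vsp) \<Otimes>\<^sub>M Asp) borel"
    by (rule measurable_cong_sets[OF sets_joint refl])
  then show ?thesis using Uh_measurable by simp
qed

lemma boot_cdf_measurable: "(\<lambda>d. boot_cdf d u) \<in> borel_measurable D"
proof -
  interpret X: prob_space X by (rule prob_space_X)
  let ?Q = "{\<omega> \<in> space M. Uh (fst \<omega>) (snd \<omega>) \<le> u}"
  have "?Q \<in> sets (D \<Otimes>\<^sub>M X)" unfolding jointM_def[symmetric] using Uh_measurable_joint by measurable
  then have "(\<lambda>d. enn2real (emeasure X (Pair d -` ?Q))) \<in> borel_measurable D"
    using X.measurable_emeasure_Pair by measurable
  moreover have "enn2real (emeasure X (Pair d -` ?Q)) = boot_cdf d u" if "d \<in> space D" for d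
    unfolding boot_cdf_def measure_def using that
    by (intro arg_cong[where f="\<lambda>S. enn2real (emeasure X S)"]) (auto simp: space_joint)
  ultimately show ?thesis by (simp cong: measurable_cong)
qed

lemma boot_cdf_measurable_joint: "(\<lambda>\<omega>. boot_cdf (fst \<omega>) u) \<in> borel_measurable M"
  unfolding jointM_def using boot_cdf_measurable by measurable

lemma boot_crit_le_iff: "\<beta> \<le> boot_cdf d u \<longleftrightarrow> boot_crit X Uh \<beta> d \<le> u" if "d \<in> space D"
proof -
  have "Uh d \<in> borel_measurable X"
    using measurable_Pair2[OF Uh_measurable_joint[unfolded jointM_def] that] by simp
  then show ?thesis
    unfolding boot_cdf_def boot_crit_def by (rule prob_space.quantile_cdf_le_iff[OF prob_space_X _ \<beta>])
qed

lemma boot_crit_measurable_joint: "(\<lambda>\<omega>. boot_crit X Uh \<beta> (fst \<omega>)) \<in> borel_measurable M"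
proof -
  have "{d \<in> space D. boot_crit X Uh \<beta> d \<le> t} = {d \<in> space D. \<beta> \<le> boot_cdf d t}" for t
    using boot_crit_le_iff by auto
  moreover have "{d \<in> space D. \<beta> \<le> boot_cdf d t} \<in> sets D" for t
    using boot_cdf_measurable by measurable
  ultimately have "boot_crit X Uh \<beta> \<in> borel_measurable D"
    unfolding borel_measurable_iff_le by simp
  then show ?thesis unfolding jointM_def by measurable
qed

lemma boot_cdf_nonneg: "0 \<le> boot_cdf d u"
  unfolding boot_cdf_def by simp

(* boot_cdf d depends only on the first n coordinates of d; padding a prefix to a full sequence
   exhibits it as a measurable function of the prefix. *)
definition pad :: "(nat \<Rightarrow> 'v) \<Rightarrow> nat \<Rightarrow> 'v" where
  "pad e i = (if i < n then e i else (SOME v. v \<in> space Vsp))"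

lemma pad_measurable: "pad \<in> measurable (\<Pi>\<^sub>M i\<in>{..<n}. Vsp) D"
proof -
  have space_P: "space P = space Vsp" by (rule sets_eq_imp_space_eq[OF sets_P])
  have "\<exists>v. v \<in> space Vsp" using prob_space.not_empty[OF prob_space_P] space_P by auto
  then have some: "(SOME v. v \<in> space Vsp) \<in> space Vsp" by (rule someI_ex)
  show ?thesis unfolding pad_def dataM_def
  proof (rule measurable_PiM_single')
    fix i :: nat
    show "(\<lambda>e. if i < n then e i else SOME v. v \<in> space Vsp) \<in> measurable (\<Pi>\<^sub>M i\<in>{..<n}. Vsp) P"
    proof (cases "i < n")
      case True
      have "(\<lambda>e. e i) \<in> measurable (\<Pi>\<^sub>M i\<in>{..<n}. Vsp) Vsp"
        using True by (intro measurable_component_singleton) auto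
      moreover have "measurable (\<Pi>\<^sub>M i\<in>{..<n}. Vsp) P = measurable (\<Pi>\<^sub>M i\<in>{..<n}. Vsp) Vsp"
        by (rule measurable_cong_sets[OF refl sets_P])
      ultimately show ?thesis using True by simp
    next
      case False
      then show ?thesis using some space_P by simp
    qed
  next
    show "(\<lambda>e i. if i < n then e i else SOME v. v \<in> space Vsp) \<in> space (\<Pi>\<^sub>M i\<in>{..<n}. Vsp) \<rightarrow> (\<Pi>\<^sub>E i\<in>UNIV. space P)"
      using some space_P by (auto simp: space_PiM PiE_iff)
  qed
qed

lemma boot_cdf_pad: "boot_cdf (pad (restrict d {..<n})) u = boot_cdf d u"
  unfolding boot_cdf_def by (simp add: pad_def Uh_prefix[of "pad (restrict d {..<n})" d])

lemma boot_event_data_prefix: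
  assumes K: "K \<in> sets borel"
  shows "{\<omega> \<in> space M. boot_cdf (fst \<omega>) u \<in> K} \<in>
     {(\<lambda>\<omega>. restrict (fst \<omega>) {..<n}) -` C \<inter> space M | C. C \<in> sets (\<Pi>\<^sub>M i\<in>{..<n}. Vsp)}"
proof -
  let ?C = "{e \<in> space (\<Pi>\<^sub>M i\<in>{..<n}. Vsp). boot_cdf (pad e) u \<in> K}"
  have "(\<lambda>e. boot_cdf (pad e) u) \<in> borel_measurable (\<Pi>\<^sub>M i\<in>{..<n}. Vsp)"
    using measurable_comp[OF pad_measurable boot_cdf_measurable] by (simp add: comp_def)
  then have C: "?C \<in> sets (\<Pi>\<^sub>M i\<in>{..<n}. Vsp)" using K by measurable
  have "restrict (fst \<omega>) {..<n} \<in> space (\<Pi>\<^sub>M i\<in>{..<n}. Vsp)" if "\<omega> \<in> space M" for \<omega>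
    using that space_data by (auto simp: space_joint space_PiM PiE_iff)
  then have "{\<omega> \<in> space M. boot_cdf (fst \<omega>) u \<in> K} = (\<lambda>\<omega>. restrict (fst \<omega>) {..<n}) -` ?C \<inter> space M"
    using boot_cdf_pad by auto
  then show ?thesis using C by blast
qed

lemma emeasure_boot_event:
  assumes K: "K \<in> sets borel"
  shows "emeasure M {\<omega>\<in>space M. boot_cdf (fst \<omega>) u \<in> K} = emeasure D {d\<in>space D. boot_cdf d u \<in> K}"
proof -
  interpret X: prob_space X by (rule prob_space_X)
  have "{d\<in>space D. boot_cdf d u \<in> K} \<in> sets D" using boot_cdf_measurable K by measurable
  moreover have "{\<omega>\<in>space M. boot_cdf (fst \<omega>) u \<in> K} = {d\<in>space D. boot_cdf d u \<in> K} \<times> space X"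
    by (auto simp: space_joint)
  ultimately show ?thesis
    unfolding jointM_def by (simp add: X.emeasure_pair_measure_Times X.emeasure_space_1)
qed

lemma emeasure_boot_event_inter:
  assumes K: "K \<in> sets borel"
  shows "emeasure M ({\<omega>\<in>space M. Uh (fst \<omega>) (snd \<omega>) \<le> u} \<inter> {\<omega>\<in>space M. boot_cdf (fst \<omega>) u \<in> K})
      = (\<integral>\<^sup>+d. indicator {d\<in>space D. boot_cdf d u \<in> K} d * ennreal (boot_cdf d u) \<partial>D)"
proof -
  interpret X: prob_space X by (rule prob_space_X)
  let ?S = "{\<omega>\<in>space M. Uh (fst \<omega>) (snd \<omega>) \<le> u} \<inter> {\<omega>\<in>space M. boot_cdf (fst \<omega>) u \<in> K}"
  have "(\<lambda>\<omega>. boot_cdf (fst \<omega>) u) \<in> borel_measurable M"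
    unfolding jointM_def using boot_cdf_measurable by measurable
  then have "?S \<in> sets (D \<Otimes>\<^sub>M X)"
    unfolding jointM_def[symmetric] using Uh_measurable_joint K by measurable
  then have "emeasure M ?S = (\<integral>\<^sup>+d. emeasure X (Pair d -` ?S) \<partial>D)"
    unfolding jointM_def by (rule X.emeasure_pair_measure_alt)
  also have "\<dots> = (\<integral>\<^sup>+d. indicator {d\<in>space D. boot_cdf d u \<in> K} d * ennreal (boot_cdf d u) \<partial>D)"
  proof (rule nn_integral_cong)
    fix d assume d: "d \<in> space D"
    have "Pair d -` ?S = (if boot_cdf d u \<in> K then {x\<in>space X. Uh d x \<le> u} else {})"
      using d by (auto simp: space_joint)
    then show "emeasure X (Pair d -` ?S) = indicator {d\<in>space D. boot_cdf d u \<in> K} d * ennreal (boot_cdf d u)"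
      using d by (simp add: boot_cdf_def X.emeasure_eq_measure indicator_def)
  qed
  finally show ?thesis .
qed

lemma measure_boot_event_inter_ge:
  assumes K: "K \<in> sets borel" and c: "0 \<le> c"
    and lower: "\<And>d. d \<in> space D \<Longrightarrow> boot_cdf d u \<in> K \<Longrightarrow> c \<le> boot_cdf d u"
  shows "c * measure M {\<omega>\<in>space M. boot_cdf (fst \<omega>) u \<in> K}
    \<le> measure M ({\<omega>\<in>space M. Uh (fst \<omega>) (snd \<omega>) \<le> u} \<inter> {\<omega>\<in>space M. boot_cdf (fst \<omega>) u \<in> K})"
proof -
  interpret prob_space M by (rule prob_space_joint)
  define CD where "CD = {d\<in>space D. boot_cdf d u \<in> K}"
  have CD: "CD \<in> sets D" unfolding CD_def using boot_cdf_measurable K by measurable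
  have "ennreal c * emeasure M {\<omega>\<in>space M. boot_cdf (fst \<omega>) u \<in> K} = ennreal c * emeasure D CD"
    unfolding CD_def emeasure_boot_event[OF K] ..
  also have "\<dots> = (\<integral>\<^sup>+d. ennreal c * indicator CD d \<partial>D)"
    using CD by (simp add: nn_integral_cmult_indicator)
  also have "\<dots> \<le> (\<integral>\<^sup>+d. indicator CD d * ennreal (boot_cdf d u) \<partial>D)"
    by (intro nn_integral_mono) (auto simp: CD_def indicator_def intro!: ennreal_leI lower)
  also have "\<dots> = emeasure M ({\<omega>\<in>space M. Uh (fst \<omega>) (snd \<omega>) \<le> u} \<inter> {\<omega>\<in>space M. boot_cdf (fst \<omega>) u \<in> K})"
    unfolding CD_def by (rule emeasure_boot_event_inter[OF K, symmetric])
  finally show ?thesis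
    using c by (simp add: emeasure_eq_measure ennreal_mult[symmetric] ennreal_le_iff)
qed

lemma measure_boot_event_inter_le:
  assumes K: "K \<in> sets borel"
    and upper: "\<And>d. d \<in> space D \<Longrightarrow> boot_cdf d u \<in> K \<Longrightarrow> boot_cdf d u \<le> c"
  shows "measure M ({\<omega>\<in>space M. Uh (fst \<omega>) (snd \<omega>) \<le> u} \<inter> {\<omega>\<in>space M. boot_cdf (fst \<omega>) u \<in> K})
    \<le> c * measure M {\<omega>\<in>space M. boot_cdf (fst \<omega>) u \<in> K}"
proof (cases "0 \<le> c")
  case False
  have "boot_cdf d u \<notin> K" if "d \<in> space D" for d
    using upper[OF that] boot_cdf_nonneg[of d u] False by linarith
  then have empty: "{\<omega>\<in>space M. boot_cdf (fst \<omega>) u \<in> K} = {}" by (auto simp: space_joint)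
  show ?thesis unfolding empty by simp
next
  case c: True
  interpret prob_space M by (rule prob_space_joint)
  define CD where "CD = {d\<in>space D. boot_cdf d u \<in> K}"
  have CD: "CD \<in> sets D" unfolding CD_def using boot_cdf_measurable K by measurable
  have "emeasure M ({\<omega>\<in>space M. Uh (fst \<omega>) (snd \<omega>) \<le> u} \<inter> {\<omega>\<in>space M. boot_cdf (fst \<omega>) u \<in> K})
      = (\<integral>\<^sup>+d. indicator CD d * ennreal (boot_cdf d u) \<partial>D)"
    unfolding CD_def by (rule emeasure_boot_event_inter[OF K])
  also have "\<dots> \<le> (\<integral>\<^sup>+d. ennreal c * indicator CD d \<partial>D)"
    by (intro nn_integral_mono) (auto simp: CD_def indicator_def intro!: ennreal_leI upper)
  also have "\<dots> = ennreal c * emeasure D CD"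
    using CD by (simp add: nn_integral_cmult_indicator)
  also have "\<dots> = ennreal c * emeasure M {\<omega>\<in>space M. boot_cdf (fst \<omega>) u \<in> K}"
    unfolding CD_def emeasure_boot_event[OF K] ..
  finally show ?thesis
    using c by (simp add: emeasure_eq_measure ennreal_mult[symmetric] ennreal_le_iff)
qed

lemma measure_copy_inter_boot_event:
  assumes indep: "indep_of_data Y" and K: "K \<in> sets borel"
  shows "measure M ({\<omega>\<in>space M. Y \<omega> \<le> t} \<inter> {\<omega>\<in>space M. boot_cdf (fst \<omega>) u \<in> K})
    = measure M {\<omega>\<in>space M. Y \<omega> \<le> t} * measure M {\<omega>\<in>space M. boot_cdf (fst \<omega>) u \<in> K}"
proof -
  have "{\<omega>\<in>space M. Y \<omega> \<le> t} = Y -` {..t} \<inter> space M" by auto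
  then have "{\<omega>\<in>space M. Y \<omega> \<le> t} \<in> {Y -` B \<inter> space M | B. B \<in> sets borel}"
    using atMost_borel[of t] by blast
  then show ?thesis
    by (rule prob_space.indep_setD[OF prob_space_joint indep _ boot_event_data_prefix[OF K]])
qed


(* On E = {G > p + nu} the event {Uh <= u} has conditional probability above p + nu, while
   {Y <= t} has probability exactly p on E by independence; the cover leaves nu P(E) <= P(B). *)
lemma prob_boot_cdf_above:
  assumes Y: "Y \<in> borel_measurable M" and indep: "indep_of_data Y" and B: "B \<in> sets M"
    and cover: "{\<omega>\<in>space M. Uh (fst \<omega>) (snd \<omega>) \<le> u} \<subseteq> {\<omega>\<in>space M. Y \<omega> \<le> t} \<union> B"
    and \<nu>: "0 < \<nu>"
  shows "measure M {\<omega>\<in>space M. measure M {\<omega>\<in>space M. Y \<omega> \<le> t} + \<nu> < boot_cdf (fst \<omega>) u}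
    \<le> measure M B / \<nu>"
proof -
  interpret prob_space M by (rule prob_space_joint)
  define p where "p = prob {\<omega>\<in>space M. Y \<omega> \<le> t}"
  define E where "E = {\<omega>\<in>space M. boot_cdf (fst \<omega>) u \<in> {p + \<nu><..}}"
  have E: "E \<in> events" unfolding E_def using boot_cdf_measurable_joint by measurable
  have "(p + \<nu>) * prob E \<le> prob ({\<omega>\<in>space M. Uh (fst \<omega>) (snd \<omega>) \<le> u} \<inter> E)"
    unfolding E_def using \<nu> by (intro measure_boot_event_inter_ge) (auto simp: p_def)
  also have "\<dots> \<le> prob ({\<omega>\<in>space M. Y \<omega> \<le> t} \<inter> E) + prob B"
    using cover Y E B by (intro finite_measure_le_Un) auto
  also have "prob ({\<omega>\<in>space M. Y \<omega> \<le> t} \<inter> E) = p * prob E"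
    unfolding p_def E_def by (rule measure_copy_inter_boot_event[OF indep]) simp
  finally have "\<nu> * prob E \<le> prob B" by (simp add: algebra_simps)
  moreover have "E = {\<omega>\<in>space M. p + \<nu> < boot_cdf (fst \<omega>) u}" unfolding E_def by auto
  ultimately show ?thesis using \<nu> unfolding p_def by (simp add: pos_le_divide_eq mult.commute)
qed

lemma prob_boot_cdf_below:
  assumes indep: "indep_of_data Y" and B: "B \<in> sets M"
    and cover: "{\<omega>\<in>space M. Y \<omega> \<le> t} \<subseteq> {\<omega>\<in>space M. Uh (fst \<omega>) (snd \<omega>) \<le> u} \<union> B"
    and \<nu>: "0 < \<nu>"
  shows "measure M {\<omega>\<in>space M. boot_cdf (fst \<omega>) u < measure M {\<omega>\<in>space M. Y \<omega> \<le> t} - \<nu>}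
    \<le> measure M B / \<nu>"
proof -
  interpret prob_space M by (rule prob_space_joint)
  define p where "p = prob {\<omega>\<in>space M. Y \<omega> \<le> t}"
  define E where "E = {\<omega>\<in>space M. boot_cdf (fst \<omega>) u \<in> {..<p - \<nu>}}"
  have E: "E \<in> events" unfolding E_def using boot_cdf_measurable_joint by measurable
  have H: "{\<omega>\<in>space M. Uh (fst \<omega>) (snd \<omega>) \<le> u} \<in> events"
    using Uh_measurable_joint by measurable
  have "p * prob E = prob ({\<omega>\<in>space M. Y \<omega> \<le> t} \<inter> E)"
    unfolding p_def E_def by (rule measure_copy_inter_boot_event[OF indep, symmetric]) simp
  also have "\<dots> \<le> prob ({\<omega>\<in>space M. Uh (fst \<omega>) (snd \<omega>) \<le> u} \<inter> E) + prob B"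
    using cover H E B by (intro finite_measure_le_Un) auto
  also have "prob ({\<omega>\<in>space M. Uh (fst \<omega>) (snd \<omega>) \<le> u} \<inter> E) \<le> (p - \<nu>) * prob E"
    unfolding E_def by (intro measure_boot_event_inter_le) auto
  finally have "\<nu> * prob E \<le> prob B" by (simp add: algebra_simps)
  moreover have "E = {\<omega>\<in>space M. boot_cdf (fst \<omega>) u < p - \<nu>}" unfolding E_def by auto
  ultimately show ?thesis using \<nu> unfolding p_def by (simp add: pos_le_divide_eq mult.commute)
qed

lemma prob_boot_crit_le:
  assumes Y: "Y \<in> borel_measurable M" and indep: "indep_of_data Y" and R': "R' \<in> borel_measurable M"
    and Uh_ge: "\<And>\<omega>. \<omega> \<in> space M \<Longrightarrow> Y \<omega> + R' \<omega> \<le> Uh (fst \<omega>) (snd \<omega>)"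
    and \<nu>: "0 < \<nu>" and level: "measure M {\<omega>\<in>space M. Y \<omega> \<le> u + \<epsilon>} + \<nu> < \<beta>"
  shows "measure M {\<omega>\<in>space M. boot_crit X Uh \<beta> (fst \<omega>) \<le> u} \<le> measure M {\<omega>\<in>space M. \<epsilon> < \<bar>R' \<omega>\<bar>} / \<nu>"
proof -
  interpret prob_space M by (rule prob_space_joint)
  let ?p = "prob {\<omega>\<in>space M. Y \<omega> \<le> u + \<epsilon>}"
  have "{\<omega>\<in>space M. \<epsilon> < \<bar>R' \<omega>\<bar>} \<in> events" using R' by measurable
  moreover have "{\<omega>\<in>space M. Uh (fst \<omega>) (snd \<omega>) \<le> u} \<subseteq> {\<omega>\<in>space M. Y \<omega> \<le> u + \<epsilon>} \<union> {\<omega>\<in>space M. \<epsilon> < \<bar>R' \<omega>\<bar>}"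
  proof
    fix \<omega> assume "\<omega> \<in> {\<omega>\<in>space M. Uh (fst \<omega>) (snd \<omega>) \<le> u}"
    then show "\<omega> \<in> {\<omega>\<in>space M. Y \<omega> \<le> u + \<epsilon>} \<union> {\<omega>\<in>space M. \<epsilon> < \<bar>R' \<omega>\<bar>}"
      using Uh_ge[of \<omega>] by (auto simp: not_less abs_le_iff)
  qed
  ultimately have "prob {\<omega>\<in>space M. ?p + \<nu> < boot_cdf (fst \<omega>) u} \<le> prob {\<omega>\<in>space M. \<epsilon> < \<bar>R' \<omega>\<bar>} / \<nu>"
    by (rule prob_boot_cdf_above[OF Y indep _ _ \<nu>])
  moreover have "{\<omega>\<in>space M. boot_crit X Uh \<beta> (fst \<omega>) \<le> u} \<subseteq> {\<omega>\<in>space M. ?p + \<nu> < boot_cdf (fst \<omega>) u}"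
  proof
    fix \<omega> assume \<omega>: "\<omega> \<in> {\<omega>\<in>space M. boot_crit X Uh \<beta> (fst \<omega>) \<le> u}"
    then have d: "fst \<omega> \<in> space D" by (auto simp: space_joint)
    have "\<beta> \<le> boot_cdf (fst \<omega>) u" using boot_crit_le_iff[OF d, of u] \<omega> by simp
    then show "\<omega> \<in> {\<omega>\<in>space M. ?p + \<nu> < boot_cdf (fst \<omega>) u}" using \<omega> level by simp
  qed
  then have "prob {\<omega>\<in>space M. boot_crit X Uh \<beta> (fst \<omega>) \<le> u} \<le> prob {\<omega>\<in>space M. ?p + \<nu> < boot_cdf (fst \<omega>) u}"
    by (rule finite_measure_mono) (use boot_cdf_measurable_joint in measurable)
  ultimately show ?thesis by linarith
qed

lemma prob_boot_crit_gt:
  assumes indep: "indep_of_data Y" and R': "R' \<in> borel_measurable M"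
    and Uh_le: "\<And>\<omega>. \<omega> \<in> space M \<Longrightarrow> Uh (fst \<omega>) (snd \<omega>) \<le> Y \<omega> + R' \<omega>"
    and \<nu>: "0 < \<nu>" and level: "\<beta> \<le> measure M {\<omega>\<in>space M. Y \<omega> \<le> u - \<epsilon>} - \<nu>"
  shows "measure M {\<omega>\<in>space M. u < boot_crit X Uh \<beta> (fst \<omega>)} \<le> measure M {\<omega>\<in>space M. \<epsilon> < \<bar>R' \<omega>\<bar>} / \<nu>"
proof -
  interpret prob_space M by (rule prob_space_joint)
  let ?p = "prob {\<omega>\<in>space M. Y \<omega> \<le> u - \<epsilon>}"
  have "{\<omega>\<in>space M. \<epsilon> < \<bar>R' \<omega>\<bar>} \<in> events" using R' by measurable
  moreover have "{\<omega>\<in>space M. Y \<omega> \<le> u - \<epsilon>} \<subseteq> {\<omega>\<in>space M. Uh (fst \<omega>) (snd \<omega>) \<le> u} \<union> {\<omega>\<in>space M. \<epsilon> < \<bar>R' \<omega>\<bar>}"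
  proof
    fix \<omega> assume "\<omega> \<in> {\<omega>\<in>space M. Y \<omega> \<le> u - \<epsilon>}"
    then show "\<omega> \<in> {\<omega>\<in>space M. Uh (fst \<omega>) (snd \<omega>) \<le> u} \<union> {\<omega>\<in>space M. \<epsilon> < \<bar>R' \<omega>\<bar>}"
      using Uh_le[of \<omega>] by (auto simp: not_less abs_le_iff)
  qed
  ultimately have "prob {\<omega>\<in>space M. boot_cdf (fst \<omega>) u < ?p - \<nu>} \<le> prob {\<omega>\<in>space M. \<epsilon> < \<bar>R' \<omega>\<bar>} / \<nu>"
    by (rule prob_boot_cdf_below[OF indep _ _ \<nu>])
  moreover have "{\<omega>\<in>space M. u < boot_crit X Uh \<beta> (fst \<omega>)} \<subseteq> {\<omega>\<in>space M. boot_cdf (fst \<omega>) u < ?p - \<nu>}"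
  proof
    fix \<omega> assume \<omega>: "\<omega> \<in> {\<omega>\<in>space M. u < boot_crit X Uh \<beta> (fst \<omega>)}"
    then have d: "fst \<omega> \<in> space D" by (auto simp: space_joint)
    have "boot_cdf (fst \<omega>) u < \<beta>" using boot_crit_le_iff[OF d, of u] \<omega> by simp
    then show "\<omega> \<in> {\<omega>\<in>space M. boot_cdf (fst \<omega>) u < ?p - \<nu>}" using \<omega> level by simp
  qed
  then have "prob {\<omega>\<in>space M. u < boot_crit X Uh \<beta> (fst \<omega>)} \<le> prob {\<omega>\<in>space M. boot_cdf (fst \<omega>) u < ?p - \<nu>}"
    by (rule finite_measure_mono) (use boot_cdf_measurable_joint in measurable)
  ultimately show ?thesis by linarith
qed

lemma rejection_prob_upper:
  fixes In :: "(nat \<Rightarrow> 'v) \<Rightarrow> real" and U Y R R' :: "(nat \<Rightarrow> 'v) \<times> 'a \<Rightarrow> real"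
  assumes In: "In \<in> borel_measurable (\<Pi>\<^sub>M i\<in>UNIV. Vsp)"
    and U: "U \<in> borel_measurable M" and Y: "Y \<in> borel_measurable M"
    and R: "R \<in> borel_measurable M" and R': "R' \<in> borel_measurable M"
    and same_distr: "distr M borel Y = distr M borel U" and indep: "indep_of_data Y"
    and In_le: "\<And>\<omega>. \<omega> \<in> space M \<Longrightarrow> In (fst \<omega>) \<le> U \<omega> + R \<omega>"
    and Uh_ge: "\<And>\<omega>. \<omega> \<in> space M \<Longrightarrow> Y \<omega> + R' \<omega> \<le> Uh (fst \<omega>) (snd \<omega>)"
    and \<nu>: "0 < \<nu>" and \<epsilon>: "0 < \<epsilon>" and \<beta>': "0 < \<beta>'" "\<beta>' + 2 * \<nu> \<le> \<beta>"
    and R_small: "measure M {\<omega>\<in>space M. \<epsilon> < \<bar>R \<omega>\<bar>} \<le> \<nu>"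
  shows "measure M {\<omega>\<in>space M. boot_crit X Uh \<beta> (fst \<omega>) < In (fst \<omega>)}
    \<le> 1 - \<beta>' + measure M {\<omega>\<in>space M. crit M In \<beta>' - 3 * \<epsilon> \<le> In (fst \<omega>) \<and> In (fst \<omega>) \<le> crit M In \<beta>' + 3 * \<epsilon>}
      + measure M {\<omega>\<in>space M. \<epsilon> < \<bar>R' \<omega>\<bar>} / \<nu>"
proof -
  interpret prob_space M by (rule prob_space_joint)
  have In_M: "(\<lambda>\<omega>. In (fst \<omega>)) \<in> borel_measurable M" by (rule data_measurable_joint[OF In])
  have \<beta>'_lt_1: "\<beta>' < 1" using \<beta>' \<beta> \<nu> by linarith
  define c where "c = crit M In \<beta>'"
  have events: "{\<omega>\<in>space M. In (fst \<omega>) \<le> c - \<epsilon>} \<in> events" "{\<omega>\<in>space M. \<epsilon> < \<bar>R \<omega>\<bar>} \<in> events"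
      "{\<omega>\<in>space M. c - 3 * \<epsilon> < In (fst \<omega>)} \<in> events"
      "{\<omega>\<in>space M. boot_crit X Uh \<beta> (fst \<omega>) \<le> c - 3 * \<epsilon>} \<in> events"
    using In_M R boot_crit_measurable_joint by measurable
  have "{\<omega>\<in>space M. U \<omega> \<le> c - 3 * \<epsilon> + \<epsilon>} \<subseteq> {\<omega>\<in>space M. In (fst \<omega>) \<le> c - \<epsilon>} \<union> {\<omega>\<in>space M. \<epsilon> < \<bar>R \<omega>\<bar>}"
  proof
    fix \<omega> assume "\<omega> \<in> {\<omega>\<in>space M. U \<omega> \<le> c - 3 * \<epsilon> + \<epsilon>}"
    then show "\<omega> \<in> {\<omega>\<in>space M. In (fst \<omega>) \<le> c - \<epsilon>} \<union> {\<omega>\<in>space M. \<epsilon> < \<bar>R \<omega>\<bar>}"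
      using In_le[of \<omega>] by (auto simp: not_less abs_le_iff)
  qed
  then have "prob {\<omega>\<in>space M. U \<omega> \<le> c - 3 * \<epsilon> + \<epsilon>}
      \<le> prob {\<omega>\<in>space M. In (fst \<omega>) \<le> c - \<epsilon>} + prob {\<omega>\<in>space M. \<epsilon> < \<bar>R \<omega>\<bar>}"
    using events by (intro finite_measure_le_Un)
  moreover have "prob {\<omega>\<in>space M. In (fst \<omega>) \<le> c - \<epsilon>} < \<beta>'"
    using crit_le_iff[OF prob_space_joint In_M \<beta>'(1) \<beta>'_lt_1, of "c - \<epsilon>"] \<epsilon> unfolding c_def by linarith
  ultimately have "prob {\<omega>\<in>space M. Y \<omega> \<le> c - 3 * \<epsilon> + \<epsilon>} + \<nu> < \<beta>"
    using measure_le_eq_if_distr_eq[OF Y U same_distr, of "c - 3 * \<epsilon> + \<epsilon>"] R_small \<beta>' by linarith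
  then have "prob {\<omega>\<in>space M. boot_crit X Uh \<beta> (fst \<omega>) \<le> c - 3 * \<epsilon>} \<le> prob {\<omega>\<in>space M. \<epsilon> < \<bar>R' \<omega>\<bar>} / \<nu>"
    using prob_boot_crit_le[OF Y indep R' Uh_ge \<nu>] by simp
  moreover have "{\<omega>\<in>space M. boot_crit X Uh \<beta> (fst \<omega>) < In (fst \<omega>)}
      \<subseteq> {\<omega>\<in>space M. c - 3 * \<epsilon> < In (fst \<omega>)} \<union> {\<omega>\<in>space M. boot_crit X Uh \<beta> (fst \<omega>) \<le> c - 3 * \<epsilon>}"
    by auto
  then have "prob {\<omega>\<in>space M. boot_crit X Uh \<beta> (fst \<omega>) < In (fst \<omega>)}
      \<le> prob {\<omega>\<in>space M. c - 3 * \<epsilon> < In (fst \<omega>)} + prob {\<omega>\<in>space M. boot_crit X Uh \<beta> (fst \<omega>) \<le> c - 3 * \<epsilon>}"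
    using events by (intro finite_measure_le_Un)
  moreover have "prob {\<omega>\<in>space M. c - 3 * \<epsilon> < In (fst \<omega>)}
      \<le> 1 - \<beta>' + prob {\<omega>\<in>space M. c - 3 * \<epsilon> \<le> In (fst \<omega>) \<and> In (fst \<omega>) \<le> c + 3 * \<epsilon>}"
    unfolding c_def by (rule prob_above_crit_minus_le[OF prob_space_joint In_M \<beta>'(1) \<beta>'_lt_1])
  ultimately show ?thesis unfolding c_def by linarith
qed

lemma rejection_prob_lower:
  fixes In :: "(nat \<Rightarrow> 'v) \<Rightarrow> real" and U Y R R' :: "(nat \<Rightarrow> 'v) \<times> 'a \<Rightarrow> real"
  assumes In: "In \<in> borel_measurable (\<Pi>\<^sub>M i\<in>UNIV. Vsp)"
    and U: "U \<in> borel_measurable M" and Y: "Y \<in> borel_measurable M"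
    and R: "R \<in> borel_measurable M" and R': "R' \<in> borel_measurable M"
    and same_distr: "distr M borel Y = distr M borel U" and indep: "indep_of_data Y"
    and In_ge: "\<And>\<omega>. \<omega> \<in> space M \<Longrightarrow> U \<omega> + R \<omega> \<le> In (fst \<omega>)"
    and Uh_le: "\<And>\<omega>. \<omega> \<in> space M \<Longrightarrow> Uh (fst \<omega>) (snd \<omega>) \<le> Y \<omega> + R' \<omega>"
    and \<nu>: "0 < \<nu>" and \<epsilon>: "0 < \<epsilon>" and \<beta>'': "\<beta> + 2 * \<nu> \<le> \<beta>''" "\<beta>'' < 1"
    and R_small: "measure M {\<omega>\<in>space M. \<epsilon> < \<bar>R \<omega>\<bar>} \<le> \<nu>"
  shows "1 - \<beta>'' - measure M {\<omega>\<in>space M. crit M In \<beta>'' - 3 * \<epsilon> \<le> In (fst \<omega>) \<and> In (fst \<omega>) \<le> crit M In \<beta>'' + 3 * \<epsilon>}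
      - measure M {\<omega>\<in>space M. \<epsilon> < \<bar>R' \<omega>\<bar>} / \<nu>
    \<le> measure M {\<omega>\<in>space M. boot_crit X Uh \<beta> (fst \<omega>) < In (fst \<omega>)}"
proof -
  interpret prob_space M by (rule prob_space_joint)
  have In_M: "(\<lambda>\<omega>. In (fst \<omega>)) \<in> borel_measurable M" by (rule data_measurable_joint[OF In])
  have \<beta>''_pos: "0 < \<beta>''" using \<beta>'' \<beta> \<nu> by linarith
  define c where "c = crit M In \<beta>''"
  have events: "{\<omega>\<in>space M. U \<omega> \<le> c + 3 * \<epsilon> - \<epsilon>} \<in> events" "{\<omega>\<in>space M. \<epsilon> < \<bar>R \<omega>\<bar>} \<in> events"
      "{\<omega>\<in>space M. boot_crit X Uh \<beta> (fst \<omega>) < In (fst \<omega>)} \<in> events"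
      "{\<omega>\<in>space M. c + 3 * \<epsilon> < boot_crit X Uh \<beta> (fst \<omega>)} \<in> events"
    using U In_M R boot_crit_measurable_joint by measurable
  have "{\<omega>\<in>space M. In (fst \<omega>) \<le> c + \<epsilon>} \<subseteq> {\<omega>\<in>space M. U \<omega> \<le> c + 3 * \<epsilon> - \<epsilon>} \<union> {\<omega>\<in>space M. \<epsilon> < \<bar>R \<omega>\<bar>}"
  proof
    fix \<omega> assume "\<omega> \<in> {\<omega>\<in>space M. In (fst \<omega>) \<le> c + \<epsilon>}"
    then show "\<omega> \<in> {\<omega>\<in>space M. U \<omega> \<le> c + 3 * \<epsilon> - \<epsilon>} \<union> {\<omega>\<in>space M. \<epsilon> < \<bar>R \<omega>\<bar>}"
      using In_ge[of \<omega>] by (auto simp: not_less abs_le_iff)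
  qed
  then have "prob {\<omega>\<in>space M. In (fst \<omega>) \<le> c + \<epsilon>}
      \<le> prob {\<omega>\<in>space M. U \<omega> \<le> c + 3 * \<epsilon> - \<epsilon>} + prob {\<omega>\<in>space M. \<epsilon> < \<bar>R \<omega>\<bar>}"
    using events by (intro finite_measure_le_Un)
  moreover have "\<beta>'' \<le> prob {\<omega>\<in>space M. In (fst \<omega>) \<le> c + \<epsilon>}"
    using crit_le_iff[OF prob_space_joint In_M \<beta>''_pos \<beta>''(2), of "c + \<epsilon>"] \<epsilon> unfolding c_def by linarith
  ultimately have "\<beta> \<le> prob {\<omega>\<in>space M. Y \<omega> \<le> c + 3 * \<epsilon> - \<epsilon>} - \<nu>"
    using measure_le_eq_if_distr_eq[OF Y U same_distr, of "c + 3 * \<epsilon> - \<epsilon>"] R_small \<beta>'' by linarith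
  then have "prob {\<omega>\<in>space M. c + 3 * \<epsilon> < boot_crit X Uh \<beta> (fst \<omega>)} \<le> prob {\<omega>\<in>space M. \<epsilon> < \<bar>R' \<omega>\<bar>} / \<nu>"
    using prob_boot_crit_gt[OF indep R' Uh_le \<nu>] by simp
  moreover have "{\<omega>\<in>space M. c + 3 * \<epsilon> < In (fst \<omega>)}
      \<subseteq> {\<omega>\<in>space M. boot_crit X Uh \<beta> (fst \<omega>) < In (fst \<omega>)} \<union> {\<omega>\<in>space M. c + 3 * \<epsilon> < boot_crit X Uh \<beta> (fst \<omega>)}"
    by auto
  then have "prob {\<omega>\<in>space M. c + 3 * \<epsilon> < In (fst \<omega>)}
      \<le> prob {\<omega>\<in>space M. boot_crit X Uh \<beta> (fst \<omega>) < In (fst \<omega>)} + prob {\<omega>\<in>space M. c + 3 * \<epsilon> < boot_crit X Uh \<beta> (fst \<omega>)}"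
    using events by (intro finite_measure_le_Un)
  moreover have "1 - \<beta>'' - prob {\<omega>\<in>space M. c - 3 * \<epsilon> \<le> In (fst \<omega>) \<and> In (fst \<omega>) \<le> c + 3 * \<epsilon>}
      \<le> prob {\<omega>\<in>space M. c + 3 * \<epsilon> < In (fst \<omega>)}"
    unfolding c_def using \<epsilon> by (intro prob_above_crit_plus_ge[OF prob_space_joint In_M \<beta>''_pos \<beta>''(2)]) simp
  ultimately show ?thesis unfolding c_def by linarith
qed

end

section \<open>Uniformity over the model\<close>

locale bootstrap_test =
  fixes \<alpha> :: real and a :: "nat \<Rightarrow> real" and P0 :: "'v measure set" and Vsp :: "'v measure"
    and A :: "'v measure \<Rightarrow> 'a measure" and Asp :: "'a measure"
    and I :: "nat \<Rightarrow> (nat \<Rightarrow> 'v) \<Rightarrow> real" and Uhat :: "nat \<Rightarrow> (nat \<Rightarrow> 'v) \<Rightarrow> 'a \<Rightarrow> real"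
    and \<delta> :: real and r :: "nat \<Rightarrow> real"
  assumes \<alpha>: "0 < \<alpha>" "\<alpha> < 1"
    and a_pos: "\<And>n. 0 < a n"
    and P0: "\<And>P. P \<in> P0 \<Longrightarrow> prob_space P \<and> sets P = sets Vsp"
    and Aux: "\<And>P. P \<in> P0 \<Longrightarrow> prob_space (A P) \<and> sets (A P) = sets Asp"
    and I_measurable: "\<And>n. I n \<in> borel_measurable (\<Pi>\<^sub>M i\<in>UNIV. Vsp)"
    and Uhat_measurable: "\<And>n. (\<lambda>\<omega>. Uhat n (fst \<omega>) (snd \<omega>)) \<in> borel_measurable ((\<Pi>\<^sub>M i\<in>UNIV. Vsp) \<Otimes>\<^sub>M Asp)"
    and Uhat_prefix: "\<And>n d d' x. (\<And>i. i < n \<Longrightarrow> d i = d' i) \<Longrightarrow> Uhat n d x = Uhat n d' x"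
    and \<delta>: "0 < \<delta>" and r: "r \<longlonglongrightarrow> 0"
    and anticoncentration: "\<And>n \<epsilon> \<alpha>' P. 0 < \<epsilon> \<Longrightarrow> \<alpha> - \<delta> \<le> \<alpha>' \<Longrightarrow> \<alpha>' \<le> \<alpha> + \<delta> \<Longrightarrow> P \<in> P0 \<Longrightarrow>
        measure (jointM P (A P)) {\<omega> \<in> space (jointM P (A P)).
            crit (jointM P (A P)) (I n) (1 - \<alpha>') - \<epsilon> \<le> I n (fst \<omega>) \<and>
            I n (fst \<omega>) \<le> crit (jointM P (A P)) (I n) (1 - \<alpha>') + \<epsilon>}
          \<le> min \<epsilon> 1 / a n + r n"
begin

abbreviation joint :: "'v measure \<Rightarrow> ((nat \<Rightarrow> 'v) \<times> 'a) measure" where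
  "joint P \<equiv> jointM P (A P)"

abbreviation rejection_prob :: "nat \<Rightarrow> 'v measure \<Rightarrow> real" where
  "rejection_prob n P \<equiv> measure (joint P) {\<omega>\<in>space (joint P). boot_crit (A P) (Uhat n) (1 - \<alpha>) (fst \<omega>) < I n (fst \<omega>)}"

lemma bootstrap_setting: "P \<in> P0 \<Longrightarrow> bootstrap_setting P Vsp (A P) Asp n (Uhat n) (1 - \<alpha>)"
  using P0[of P] Aux[of P] \<alpha>
  by (intro bootstrap_setting.intro Uhat_measurable Uhat_prefix) simp_all

lemma window_le:
  assumes \<epsilon>: "0 < \<epsilon>" and \<alpha>': "\<alpha> - \<delta> \<le> \<alpha>'" "\<alpha>' \<le> \<alpha> + \<delta>" and P: "P \<in> P0"
  shows "measure (joint P) {\<omega> \<in> space (joint P). crit (joint P) (I n) (1 - \<alpha>') - \<epsilon> * a n \<le> I n (fst \<omega>) \<and>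
      I n (fst \<omega>) \<le> crit (joint P) (I n) (1 - \<alpha>') + \<epsilon> * a n} \<le> \<epsilon> + r n"
proof -
  have "min (\<epsilon> * a n) 1 / a n \<le> \<epsilon> * a n / a n"
    using a_pos[of n] by (intro divide_right_mono) auto
  also have "\<dots> = \<epsilon>" using a_pos[of n] by simp
  finally show ?thesis
    using anticoncentration[of "\<epsilon> * a n" \<alpha>' P n] \<epsilon> \<alpha>' P a_pos[of n] by simp
qed

lemma rejection_prob_le:
  assumes P: "P \<in> P0" and copy: "valid_copy P0 joint Vsp U Us"
    and R: "unif_op P0 joint R a" and R': "unif_op P0 joint R' a"
    and I_le: "\<And>\<omega>. \<omega> \<in> space (joint P) \<Longrightarrow> I n (fst \<omega>) \<le> U n P \<omega> + R n P \<omega>"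
    and Uhat_ge: "\<And>\<omega>. \<omega> \<in> space (joint P) \<Longrightarrow> Us n P \<omega> + R' n P \<omega> \<le> Uhat n (fst \<omega>) (snd \<omega>)"
    and \<nu>: "0 < \<nu>" "2 * \<nu> \<le> \<delta>" "2 * \<nu> < 1 - \<alpha>" and \<epsilon>: "0 < \<epsilon>"
    and R_small: "measure (joint P) {\<omega>\<in>space (joint P). \<epsilon> * a n < \<bar>R n P \<omega>\<bar>} \<le> \<nu>"
  shows "rejection_prob n P
    \<le> \<alpha> + 2 * \<nu> + 3 * \<epsilon> + r n + measure (joint P) {\<omega>\<in>space (joint P). \<epsilon> * a n < \<bar>R' n P \<omega>\<bar>} / \<nu>"
proof -
  interpret bootstrap_setting P Vsp "A P" Asp n "Uhat n" "1 - \<alpha>" using P by (rule bootstrap_setting)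
  have "rejection_prob n P \<le> 1 - (1 - (\<alpha> + 2 * \<nu>))
      + measure (joint P) {\<omega> \<in> space (joint P). crit (joint P) (I n) (1 - (\<alpha> + 2 * \<nu>)) - 3 * (\<epsilon> * a n) \<le> I n (fst \<omega>) \<and>
          I n (fst \<omega>) \<le> crit (joint P) (I n) (1 - (\<alpha> + 2 * \<nu>)) + 3 * (\<epsilon> * a n)}
      + measure (joint P) {\<omega>\<in>space (joint P). \<epsilon> * a n < \<bar>R' n P \<omega>\<bar>} / \<nu>"
  proof (rule rejection_prob_upper[OF I_measurable _ _ _ _ _ _ I_le Uhat_ge \<nu>(1) _ _ _ R_small])
    show "U n P \<in> borel_measurable (joint P)" "Us n P \<in> borel_measurable (joint P)"
      "distr (joint P) borel (Us n P) = distr (joint P) borel (U n P)" "indep_of_data (Us n P)"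
      using copy P unfolding valid_copy_def by blast+
    show "R n P \<in> borel_measurable (joint P)" "R' n P \<in> borel_measurable (joint P)"
      using R R' P unfolding unif_op_def by blast+
    show "0 < \<epsilon> * a n" using \<epsilon> a_pos[of n] by simp
    show "0 < 1 - (\<alpha> + 2 * \<nu>)" "1 - (\<alpha> + 2 * \<nu>) + 2 * \<nu> \<le> 1 - \<alpha>" using \<nu> by simp_all
  qed
  moreover have "measure (joint P) {\<omega> \<in> space (joint P). crit (joint P) (I n) (1 - (\<alpha> + 2 * \<nu>)) - 3 * (\<epsilon> * a n) \<le> I n (fst \<omega>) \<and>
          I n (fst \<omega>) \<le> crit (joint P) (I n) (1 - (\<alpha> + 2 * \<nu>)) + 3 * (\<epsilon> * a n)} \<le> 3 * \<epsilon> + r n"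
    using window_le[of "3 * \<epsilon>" "\<alpha> + 2 * \<nu>" P n] \<epsilon> \<nu> \<delta> P by (simp add: mult.assoc)
  ultimately show ?thesis by linarith
qed

lemma rejection_prob_ge:
  assumes P: "P \<in> P0" and copy: "valid_copy P0 joint Vsp U Us"
    and R: "unif_op P0 joint R a" and R': "unif_op P0 joint R' a"
    and I_ge: "\<And>\<omega>. \<omega> \<in> space (joint P) \<Longrightarrow> U n P \<omega> + R n P \<omega> \<le> I n (fst \<omega>)"
    and Uhat_le: "\<And>\<omega>. \<omega> \<in> space (joint P) \<Longrightarrow> Uhat n (fst \<omega>) (snd \<omega>) \<le> Us n P \<omega> + R' n P \<omega>"
    and \<nu>: "0 < \<nu>" "2 * \<nu> \<le> \<delta>" "2 * \<nu> < \<alpha>" and \<epsilon>: "0 < \<epsilon>"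
    and R_small: "measure (joint P) {\<omega>\<in>space (joint P). \<epsilon> * a n < \<bar>R n P \<omega>\<bar>} \<le> \<nu>"
  shows "\<alpha> - 2 * \<nu> - 3 * \<epsilon> - r n - measure (joint P) {\<omega>\<in>space (joint P). \<epsilon> * a n < \<bar>R' n P \<omega>\<bar>} / \<nu>
    \<le> rejection_prob n P"
proof -
  interpret bootstrap_setting P Vsp "A P" Asp n "Uhat n" "1 - \<alpha>" using P by (rule bootstrap_setting)
  have "1 - (1 - (\<alpha> - 2 * \<nu>))
      - measure (joint P) {\<omega> \<in> space (joint P). crit (joint P) (I n) (1 - (\<alpha> - 2 * \<nu>)) - 3 * (\<epsilon> * a n) \<le> I n (fst \<omega>) \<and>
          I n (fst \<omega>) \<le> crit (joint P) (I n) (1 - (\<alpha> - 2 * \<nu>)) + 3 * (\<epsilon> * a n)}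
      - measure (joint P) {\<omega>\<in>space (joint P). \<epsilon> * a n < \<bar>R' n P \<omega>\<bar>} / \<nu> \<le> rejection_prob n P"
  proof (rule rejection_prob_lower[OF I_measurable _ _ _ _ _ _ I_ge Uhat_le \<nu>(1) _ _ _ R_small])
    show "U n P \<in> borel_measurable (joint P)" "Us n P \<in> borel_measurable (joint P)"
      "distr (joint P) borel (Us n P) = distr (joint P) borel (U n P)" "indep_of_data (Us n P)"
      using copy P unfolding valid_copy_def by blast+
    show "R n P \<in> borel_measurable (joint P)" "R' n P \<in> borel_measurable (joint P)"
      using R R' P unfolding unif_op_def by blast+
    show "0 < \<epsilon> * a n" using \<epsilon> a_pos[of n] by simp
    show "1 - \<alpha> + 2 * \<nu> \<le> 1 - (\<alpha> - 2 * \<nu>)" "1 - (\<alpha> - 2 * \<nu>) < 1" using \<nu> by simp_all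
  qed
  moreover have "measure (joint P) {\<omega> \<in> space (joint P). crit (joint P) (I n) (1 - (\<alpha> - 2 * \<nu>)) - 3 * (\<epsilon> * a n) \<le> I n (fst \<omega>) \<and>
          I n (fst \<omega>) \<le> crit (joint P) (I n) (1 - (\<alpha> - 2 * \<nu>)) + 3 * (\<epsilon> * a n)} \<le> 3 * \<epsilon> + r n"
    using window_le[of "3 * \<epsilon>" "\<alpha> - 2 * \<nu>" P n] \<epsilon> \<nu> \<delta> P by (simp add: mult.assoc)
  ultimately show ?thesis by linarith
qed

lemma eventually_remainders_small:
  assumes R: "unif_op P0 joint R a" and R': "unif_op P0 joint R' a" and \<nu>: "0 < \<nu>" and \<eta>: "0 < \<eta>"
  shows "eventually (\<lambda>n. r n \<le> \<eta> / 8 \<and>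
      (\<forall>P\<in>P0. measure (joint P) {\<omega>\<in>space (joint P). \<eta> / 12 * a n < \<bar>R n P \<omega>\<bar>} \<le> \<nu>) \<and>
      (\<forall>P\<in>P0. measure (joint P) {\<omega>\<in>space (joint P). \<eta> / 12 * a n < \<bar>R' n P \<omega>\<bar>} / \<nu> \<le> \<eta> / 8)) sequentially"
proof (intro eventually_conj)
  show "eventually (\<lambda>n. r n \<le> \<eta> / 8) sequentially"
    using order_tendstoD(2)[OF r, of "\<eta> / 8"] \<eta> by (auto elim: eventually_mono)
  show "eventually (\<lambda>n. \<forall>P\<in>P0. measure (joint P) {\<omega>\<in>space (joint P). \<eta> / 12 * a n < \<bar>R n P \<omega>\<bar>} \<le> \<nu>) sequentially"
    using R \<eta> \<nu> unfolding unif_op_def by (meson divide_pos_pos zero_less_numeral)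
  have "eventually (\<lambda>n. \<forall>P\<in>P0. measure (joint P) {\<omega>\<in>space (joint P). \<eta> / 12 * a n < \<bar>R' n P \<omega>\<bar>} \<le> \<nu> * (\<eta> / 8)) sequentially"
    using R' \<eta> \<nu> unfolding unif_op_def by (meson divide_pos_pos mult_pos_pos zero_less_numeral)
  then show "eventually (\<lambda>n. \<forall>P\<in>P0. measure (joint P) {\<omega>\<in>space (joint P). \<eta> / 12 * a n < \<bar>R' n P \<omega>\<bar>} / \<nu> \<le> \<eta> / 8) sequentially"
    by eventually_elim (use \<nu> in \<open>simp add: divide_le_eq mult.commute\<close>)
qed

lemma rejection_prob_eventually_le:
  assumes copy: "valid_copy P0 joint Vsp U Us"
    and R: "unif_op P0 joint R a" and R': "unif_op P0 joint R' a"
    and I_le: "\<forall>n. \<forall>P\<in>P0. \<forall>\<omega>\<in>space (joint P). I n (fst \<omega>) \<le> U n P \<omega> + R n P \<omega>"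
    and Uhat_ge: "\<forall>n. \<forall>P\<in>P0. \<forall>\<omega>\<in>space (joint P). Us n P \<omega> + R' n P \<omega> \<le> Uhat n (fst \<omega>) (snd \<omega>)"
    and \<eta>: "0 < \<eta>"
  shows "eventually (\<lambda>n. \<forall>P\<in>P0. rejection_prob n P \<le> \<alpha> + \<eta>) sequentially"
proof -
  define \<nu> where "\<nu> = min (\<eta> / 8) (min (\<delta> / 2) ((1 - \<alpha>) / 4))"
  have "\<nu> \<le> \<delta> / 2" "\<nu> \<le> (1 - \<alpha>) / 4"
    unfolding \<nu>_def by (rule order_trans[OF min.cobounded2 min.cobounded1],
                            rule order_trans[OF min.cobounded2 min.cobounded2])
  then have \<nu>: "0 < \<nu>" "\<nu> \<le> \<eta> / 8" "2 * \<nu> \<le> \<delta>" "2 * \<nu> < 1 - \<alpha>"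
    using \<eta> \<delta> \<alpha> unfolding \<nu>_def by auto
  show ?thesis
    using eventually_remainders_small[OF R R' \<nu>(1) \<eta>]
  proof eventually_elim
    case (elim n)
    show ?case
    proof
      fix P assume P: "P \<in> P0"
      let ?R' = "measure (joint P) {\<omega>\<in>space (joint P). \<eta> / 12 * a n < \<bar>R' n P \<omega>\<bar>} / \<nu>"
      have "rejection_prob n P \<le> \<alpha> + 2 * \<nu> + 3 * (\<eta> / 12) + r n + ?R'"
        using \<eta> elim P by (intro rejection_prob_le[OF P copy R R' I_le[rule_format, OF P] Uhat_ge[rule_format, OF P] \<nu>(1,3,4)]) auto
      moreover have "r n \<le> \<eta> / 8" "?R' \<le> \<eta> / 8" using elim P by blast+
      ultimately show "rejection_prob n P \<le> \<alpha> + \<eta>" using \<nu>(2) \<eta> by linarith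
    qed
  qed
qed

lemma rejection_prob_eventually_ge:
  assumes copy: "valid_copy P0 joint Vsp U Us"
    and R: "unif_op P0 joint R a" and R': "unif_op P0 joint R' a"
    and I_ge: "\<forall>n. \<forall>P\<in>P0. \<forall>\<omega>\<in>space (joint P). U n P \<omega> + R n P \<omega> \<le> I n (fst \<omega>)"
    and Uhat_le: "\<forall>n. \<forall>P\<in>P0. \<forall>\<omega>\<in>space (joint P). Uhat n (fst \<omega>) (snd \<omega>) \<le> Us n P \<omega> + R' n P \<omega>"
    and \<eta>: "0 < \<eta>"
  shows "eventually (\<lambda>n. \<forall>P\<in>P0. \<alpha> - \<eta> \<le> rejection_prob n P) sequentially"
proof -
  define \<nu> where "\<nu> = min (\<eta> / 8) (min (\<delta> / 2) (\<alpha> / 4))"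
  have "\<nu> \<le> \<delta> / 2" "\<nu> \<le> \<alpha> / 4"
    unfolding \<nu>_def by (rule order_trans[OF min.cobounded2 min.cobounded1],
                            rule order_trans[OF min.cobounded2 min.cobounded2])
  then have \<nu>: "0 < \<nu>" "\<nu> \<le> \<eta> / 8" "2 * \<nu> \<le> \<delta>" "2 * \<nu> < \<alpha>"
    using \<eta> \<delta> \<alpha> unfolding \<nu>_def by auto
  show ?thesis
    using eventually_remainders_small[OF R R' \<nu>(1) \<eta>]
  proof eventually_elim
    case (elim n)
    show ?case
    proof
      fix P assume P: "P \<in> P0"
      let ?R' = "measure (joint P) {\<omega>\<in>space (joint P). \<eta> / 12 * a n < \<bar>R' n P \<omega>\<bar>} / \<nu>"
      have "\<alpha> - 2 * \<nu> - 3 * (\<eta> / 12) - r n - ?R' \<le> rejection_prob n P"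
        using \<eta> elim P by (intro rejection_prob_ge[OF P copy R R' I_ge[rule_format, OF P] Uhat_le[rule_format, OF P] \<nu>(1,3,4)]) auto
      moreover have "r n \<le> \<eta> / 8" "?R' \<le> \<eta> / 8" using elim P by blast+
      ultimately show "\<alpha> - \<eta> \<le> rejection_prob n P" using \<nu>(2) \<eta> by linarith
    qed
  qed
qed

lemma rejection_prob_eventually_close:
  assumes copy: "valid_copy P0 joint Vsp U Us"
    and R: "unif_op P0 joint R a" and R': "unif_op P0 joint R' a"
    and I_eq: "\<forall>n. \<forall>P\<in>P0. \<forall>\<omega>\<in>space (joint P). I n (fst \<omega>) = U n P \<omega> + R n P \<omega>"
    and Uhat_eq: "\<forall>n. \<forall>P\<in>P0. \<forall>\<omega>\<in>space (joint P). Uhat n (fst \<omega>) (snd \<omega>) = Us n P \<omega> + R' n P \<omega>"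
    and \<eta>: "0 < \<eta>"
  shows "eventually (\<lambda>n. \<forall>P\<in>P0. \<bar>rejection_prob n P - \<alpha>\<bar> \<le> \<eta>) sequentially"
proof -
  have "eventually (\<lambda>n. \<forall>P\<in>P0. rejection_prob n P \<le> \<alpha> + \<eta>) sequentially"
    using I_eq Uhat_eq by (intro rejection_prob_eventually_le[OF copy R R' _ _ \<eta>]) simp_all
  moreover have "eventually (\<lambda>n. \<forall>P\<in>P0. \<alpha> - \<eta> \<le> rejection_prob n P) sequentially"
    using I_eq Uhat_eq by (intro rejection_prob_eventually_ge[OF copy R R' _ _ \<eta>]) simp_all
  ultimately show ?thesis by eventually_elim (auto simp: abs_le_iff)
qed

end

theorem lemmaD6:
  fixes \<alpha> :: real and a :: "nat \<Rightarrow> real" and P0 :: "'v measure set" and Vsp :: "'v measure"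
    and A :: "'v measure \<Rightarrow> 'a measure" and Asp :: "'a measure"
    and I :: "nat \<Rightarrow> (nat \<Rightarrow> 'v) \<Rightarrow> real" and Uhat :: "nat \<Rightarrow> (nat \<Rightarrow> 'v) \<Rightarrow> 'a \<Rightarrow> real"
  assumes alpha: "0 < \<alpha>" "\<alpha> < 1"
    and a_pos: "\<forall>n. 0 < a n"
    and P0: "\<forall>P\<in>P0. prob_space P \<and> sets P = sets Vsp"
    and Aux: "\<forall>P\<in>P0. prob_space (A P) \<and> sets (A P) = sets Asp"
    and I_meas: "\<forall>n. I n \<in> borel_measurable (\<Pi>\<^sub>M i\<in>UNIV. Vsp)"
    and I_data: "\<forall>n d d'. (\<forall>i<n. d i = d' i) \<longrightarrow> I n d = I n d'"
    and Uhat_meas: "\<forall>n. (\<lambda>\<omega>. Uhat n (fst \<omega>) (snd \<omega>)) \<in> borel_measurable ((\<Pi>\<^sub>M i\<in>UNIV. Vsp) \<Otimes>\<^sub>M Asp)"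
    and Uhat_data: "\<forall>n d d' x. (\<forall>i<n. d i = d' i) \<longrightarrow> Uhat n d x = Uhat n d' x"
    and anticonc: "\<exists>\<delta>>0. \<exists>r. r \<longlonglongrightarrow> 0 \<and>
        (\<forall>n \<epsilon> \<alpha>'. \<epsilon> > 0 \<longrightarrow> \<alpha> - \<delta> \<le> \<alpha>' \<longrightarrow> \<alpha>' \<le> \<alpha> + \<delta> \<longrightarrow>
          (\<forall>P\<in>P0. measure (jointM P (A P))
              {\<omega> \<in> space (jointM P (A P)).
                 crit (jointM P (A P)) (I n) (1 - \<alpha>') - \<epsilon> \<le> I n (fst \<omega>) \<and>
                 I n (fst \<omega>) \<le> crit (jointM P (A P)) (I n) (1 - \<alpha>') + \<epsilon>}
            \<le> min \<epsilon> 1 / a n + r n))"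
  shows
   "(\<forall>U Ustar.
       valid_copy P0 (\<lambda>P. jointM P (A P)) Vsp U Ustar \<and>
       (\<exists>R. unif_op P0 (\<lambda>P. jointM P (A P)) R a \<and>
            (\<forall>n. \<forall>P\<in>P0. \<forall>\<omega>\<in>space (jointM P (A P)). I n (fst \<omega>) \<le> U n P \<omega> + R n P \<omega>)) \<and>
       (\<exists>R. unif_op P0 (\<lambda>P. jointM P (A P)) R a \<and>
            (\<forall>n. \<forall>P\<in>P0. \<forall>\<omega>\<in>space (jointM P (A P)).
                Uhat n (fst \<omega>) (snd \<omega>) \<ge> Ustar n P \<omega> + R n P \<omega>))
     \<longrightarrow> (\<forall>\<eta>>0. eventually (\<lambda>n. \<forall>P\<in>P0.
            measure (jointM P (A P))
              {\<omega> \<in> space (jointM P (A P)). I n (fst \<omega>) > boot_crit (A P) (Uhat n) (1 - \<alpha>) (fst \<omega>)}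
            \<le> \<alpha> + \<eta>) sequentially))
    \<and>
    (\<forall>U Ustar.
       valid_copy P0 (\<lambda>P. jointM P (A P)) Vsp U Ustar \<and>
       (\<exists>R. unif_op P0 (\<lambda>P. jointM P (A P)) R a \<and>
            (\<forall>n. \<forall>P\<in>P0. \<forall>\<omega>\<in>space (jointM P (A P)). I n (fst \<omega>) = U n P \<omega> + R n P \<omega>)) \<and>
       (\<exists>R. unif_op P0 (\<lambda>P. jointM P (A P)) R a \<and>
            (\<forall>n. \<forall>P\<in>P0. \<forall>\<omega>\<in>space (jointM P (A P)).
                Uhat n (fst \<omega>) (snd \<omega>) = Ustar n P \<omega> + R n P \<omega>))
     \<longrightarrow> (\<forall>\<eta>>0. eventually (\<lambda>n. \<forall>P\<in>P0.
            \<bar>measure (jointM P (A P))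
              {\<omega> \<in> space (jointM P (A P)). I n (fst \<omega>) > boot_crit (A P) (Uhat n) (1 - \<alpha>) (fst \<omega>)}
             - \<alpha>\<bar> \<le> \<eta>) sequentially))"
proof -
  obtain \<delta> r where "0 < \<delta>" "r \<longlonglongrightarrow> 0" and window: "\<forall>n \<epsilon> \<alpha>'. \<epsilon> > 0 \<longrightarrow> \<alpha> - \<delta> \<le> \<alpha>' \<longrightarrow> \<alpha>' \<le> \<alpha> + \<delta> \<longrightarrow>
      (\<forall>P\<in>P0. measure (jointM P (A P))
          {\<omega> \<in> space (jointM P (A P)).
             crit (jointM P (A P)) (I n) (1 - \<alpha>') - \<epsilon> \<le> I n (fst \<omega>) \<and>
             I n (fst \<omega>) \<le> crit (jointM P (A P)) (I n) (1 - \<alpha>') + \<epsilon>}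
        \<le> min \<epsilon> 1 / a n + r n)"
    using anticonc by blast
  interpret bootstrap_test \<alpha> a P0 Vsp A Asp I Uhat \<delta> r
  proof unfold_locales
    show "Uhat n d x = Uhat n d' x" if "\<And>i. i < n \<Longrightarrow> d i = d' i" for n d d' x
      by (rule Uhat_data[rule_format]) (simp add: that)
  qed (use alpha a_pos P0 Aux I_meas Uhat_meas \<open>0 < \<delta>\<close> \<open>r \<longlonglongrightarrow> 0\<close> window in simp_all)
  show ?thesis
    by (blast intro: rejection_prob_eventually_le rejection_prob_eventually_close)
qed

end
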